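(* Let $\lambda\geqslant\omega$ be a cardinal and $n$ a positive integer, and let $\mathscr{I}_\lambda^n$ carry any Hausdorff topology making it a topological semigroup. Then the Bohr compactification $B(\mathscr{I}_\lambda^n)$ of $\mathscr{I}_\lambda^n$ is a trivial (one-element) semigroup.
   Context: A topological semigroup is a Hausdorff space with a continuous associative multiplication. For a set $X$ of cardinality $\lambda$, $\mathscr{I}(X)$ is the semigroup of all partial one-to-one maps of $X$ (including the empty map) under composition; the rank of $\alpha$ is $|\operatorname{ran}\alpha|$, and $\mathscr{I}_\lambda^n=\{\alpha\in\mathscr{I}(X):\operatorname{rank}\alpha\leqslant n\}$. A Bohr compactification of a topological semigroup $S$ is a pair $(\beta,B(S))$ where $B(S)$ is a compact topological semigroup and $\beta\colon S\to B(S)$ is a continuous homomorphism such that for every continuous homomorphism $g\colon S\to T$ into a compact topological semigroup $T$ there is a unique continuous homomorphism $f\colon B(S)\to T$ with $g=\beta f$ (maps written on the right, so $(s)g=((s)\beta)f$). *)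

theory Defs
  imports "HOL-Analysis.Analysis"
begin

text \<open>Maps are written on the right, so the
  product alpha * beta (first alpha, then beta) is beta o_m alpha (map_comp).\<close>

definition partial_bijections :: "'a set \<Rightarrow> ('a \<rightharpoonup> 'a) set" where
  "partial_bijections X = {\<alpha>. dom \<alpha> \<subseteq> X \<and> ran \<alpha> \<subseteq> X \<and> inj_on \<alpha> (dom \<alpha>)}"

definition rank :: "('a \<rightharpoonup> 'a) \<Rightarrow> nat" where
  "rank \<alpha> = card (ran \<alpha>)"

text \<open>The semigroup I_lambda^n of partial bijections of X of rank at most n
  (finite rank is required explicitly since card of an infinite set is 0).\<close>
definition I_rank :: "'a set \<Rightarrow> nat \<Rightarrow> ('a \<rightharpoonup> 'a) set" where
  "I_rank X n = {\<alpha> \<in> partial_bijections X. finite (ran \<alpha>) \<and> rank \<alpha> \<le> n}"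

definition I_mult :: "('a \<rightharpoonup> 'a) \<Rightarrow> ('a \<rightharpoonup> 'a) \<Rightarrow> ('a \<rightharpoonup> 'a)" where
  "I_mult \<alpha> \<beta> = \<beta> \<circ>\<^sub>m \<alpha>"

definition topological_semigroup :: "'a topology \<Rightarrow> ('a \<Rightarrow> 'a \<Rightarrow> 'a) \<Rightarrow> bool" where
  "topological_semigroup \<tau> m \<longleftrightarrow>
     Hausdorff_space \<tau> \<and>
     (\<forall>x\<in>topspace \<tau>. \<forall>y\<in>topspace \<tau>. m x y \<in> topspace \<tau>) \<and>
     (\<forall>x\<in>topspace \<tau>. \<forall>y\<in>topspace \<tau>. \<forall>z\<in>topspace \<tau>. m (m x y) z = m x (m y z)) \<and>
     continuous_map (prod_topology \<tau> \<tau>) \<tau> (\<lambda>(x, y). m x y)"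

definition semigroup_hom :: "'a set \<Rightarrow> ('a \<Rightarrow> 'a \<Rightarrow> 'a) \<Rightarrow> ('b \<Rightarrow> 'b \<Rightarrow> 'b) \<Rightarrow> ('a \<Rightarrow> 'b) \<Rightarrow> bool" where
  "semigroup_hom S m m' f \<longleftrightarrow> (\<forall>x\<in>S. \<forall>y\<in>S. f (m x y) = m' (f x) (f y))"

text \<open>The universal property is required for all compact topological semigroups whose
  carrier lives in the same type as B; uniqueness of f is up to agreement on B.\<close>
definition bohr_compactification ::
  "'a topology \<Rightarrow> ('a \<Rightarrow> 'a \<Rightarrow> 'a) \<Rightarrow> ('a \<Rightarrow> 'b) \<Rightarrow> 'b topology \<Rightarrow> ('b \<Rightarrow> 'b \<Rightarrow> 'b) \<Rightarrow> bool" where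
  "bohr_compactification \<tau> m \<beta> \<sigma> mB \<longleftrightarrow>
     topological_semigroup \<sigma> mB \<and> compact_space \<sigma> \<and>
     continuous_map \<tau> \<sigma> \<beta> \<and> semigroup_hom (topspace \<tau>) m mB \<beta> \<and>
     (\<forall>(\<rho> :: 'b topology) mT g.
        topological_semigroup \<rho> mT \<and> compact_space \<rho> \<and>
        continuous_map \<tau> \<rho> g \<and> semigroup_hom (topspace \<tau>) m mT g \<longrightarrow>
        (\<exists>f. continuous_map \<sigma> \<rho> f \<and> semigroup_hom (topspace \<sigma>) mB mT f \<and>
             (\<forall>s\<in>topspace \<tau>. g s = f (\<beta> s)) \<and>
             (\<forall>f'. continuous_map \<sigma> \<rho> f' \<and> semigroup_hom (topspace \<sigma>) mB mT f' \<and>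
                   (\<forall>s\<in>topspace \<tau>. g s = f' (\<beta> s)) \<longrightarrow>
                   (\<forall>x\<in>topspace \<sigma>. f' x = f x))))"

end

theory Submission
  imports Defs
begin

(* Let S = I_lambda^n with zero 0 (the empty map).  Every alpha in S factors in
   infinitely many "orthogonal" ways: there are a_m, b_m in S (m in nat) with a_m b_m = alpha
   and a_m b_k = 0 for m ~= k; one obtains them by copying dom alpha onto pairwise disjoint
   subsets of the infinite set X.  In a compact Hausdorff topological semigroup T such a
   configuration forces alpha's image to equal 0's image: the pairs (a_m, b_m) accumulate at
   some point (u, v), and by continuity every neighbourhood of u v contains both a diagonal
   and an off-diagonal product, so these cannot be separated.  Hence every continuous homomorphism from S to a compact semigroup
   is constant, in particular the Bohr map beta; by uniqueness in the universal property the
   identity of B(S) and the constant map agree, so B(S) is a single point.  The argument works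
   for every n. *)

section \<open>Compact topological semigroups\<close>

lemma compact_t1_injective_sequence_clusters:
  fixes p :: "nat \<Rightarrow> 'a"
  assumes "compact_space X" and "t1_space X" and "inj p" and "range p \<subseteq> topspace X"
  shows "\<exists>q\<in>topspace X. \<forall>U. openin X U \<and> q \<in> U \<longrightarrow> (\<exists>m k. m \<noteq> k \<and> p m \<in> U \<and> p k \<in> U)"
proof -
  have "infinite (range p)"
    using \<open>inj p\<close> by (simp add: finite_image_iff)
  then obtain q where q: "q \<in> X derived_set_of (range p)"
    using compact_space_imp_Bolzano_Weierstrass assms(1,4) by blast
  have near: "\<exists>y. y \<noteq> q \<and> y \<in> range p \<and> y \<in> U" if "openin X U" "q \<in> U" for U
    using q that unfolding in_derived_set_of by blast
  have "\<exists>m k. m \<noteq> k \<and> p m \<in> U \<and> p k \<in> U" if U: "openin X U" "q \<in> U" for U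
  proof -
    obtain m where m: "p m \<noteq> q" "p m \<in> U"
      using near[OF U] by blast
    have "openin X (U - {p m})"
      using U(1) \<open>t1_space X\<close> by (simp add: t1_space_openin_delete_alt)
    then obtain k where k: "p k \<in> U - {p m}"
      using near[of "U - {p m}"] U(2) m(1) by blast
    then have "m \<noteq> k" by auto
    with m k show ?thesis by blast
  qed
  moreover have "q \<in> topspace X"
    using q by (simp add: in_derived_set_of)
  ultimately show ?thesis by blast
qed

lemma t1_space_neighbourhood_avoiding_one:
  assumes "t1_space X" and "e \<noteq> z" and "c \<in> topspace X" "e \<in> topspace X" "z \<in> topspace X"
  obtains W where "openin X W" "c \<in> W" "e \<notin> W \<or> z \<notin> W"
  using assms that unfolding t1_space_def by metis

lemma continuous_map_prod_neighbourhoods: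
  assumes cont: "continuous_map (prod_topology X Y) Z (\<lambda>(x, y). f x y)"
    and "openin Z W" and "x \<in> topspace X" "y \<in> topspace Y" "f x y \<in> W"
  obtains G H where "openin X G" "openin Y H" "x \<in> G" "y \<in> H"
    and "\<And>u v. u \<in> G \<Longrightarrow> v \<in> H \<Longrightarrow> f u v \<in> W"
proof -
  define Pre where "Pre = {p \<in> topspace (prod_topology X Y). (\<lambda>(x, y). f x y) p \<in> W}"
  have "openin (prod_topology X Y) Pre"
    unfolding Pre_def using openin_continuous_map_preimage[OF cont \<open>openin Z W\<close>] .
  then have "\<exists>G H. openin X G \<and> openin Y H \<and> x \<in> G \<and> y \<in> H \<and> G \<times> H \<subseteq> Pre"
    using assms(3-5) unfolding openin_prod_topology_alt by (simp add: Pre_def)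
  then show ?thesis
    using that by (fastforce simp: Pre_def)
qed

lemma compact_semigroup_diagonal_collapse:
  fixes a b :: "nat \<Rightarrow> 'b"
  assumes ts: "topological_semigroup \<sigma> mul" and "compact_space \<sigma>"
    and ab: "\<And>m. a m \<in> topspace \<sigma>" "\<And>m. b m \<in> topspace \<sigma>"
    and diag: "\<And>m. mul (a m) (b m) = e"
    and off: "\<And>m k. m \<noteq> k \<Longrightarrow> mul (a m) (b k) = z"
  shows "e = z"
proof (rule ccontr)
  assume "e \<noteq> z"
  have Haus: "Hausdorff_space \<sigma>"
    and closed: "\<And>x y. x \<in> topspace \<sigma> \<Longrightarrow> y \<in> topspace \<sigma> \<Longrightarrow> mul x y \<in> topspace \<sigma>"
    and cont: "continuous_map (prod_topology \<sigma> \<sigma>) \<sigma> (\<lambda>(x, y). mul x y)"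
    using ts by (auto simp: topological_semigroup_def)
  define p where "p m = (a m, b m)" for m
  have "inj p"
  proof (rule injI)
    fix m k assume "p m = p k"
    then have "b m = b k" by (simp add: p_def)
    then show "m = k"
      using diag[of m] off[of m k] \<open>e \<noteq> z\<close> by auto
  qed
  moreover have "compact_space (prod_topology \<sigma> \<sigma>)" "t1_space (prod_topology \<sigma> \<sigma>)"
    using \<open>compact_space \<sigma>\<close> Haus
    by (simp_all add: compact_space_prod_topology Hausdorff_space_prod_topology Hausdorff_imp_t1_space)
  moreover have "range p \<subseteq> topspace (prod_topology \<sigma> \<sigma>)"
    using ab by (auto simp: p_def)
  ultimately have "\<exists>q\<in>topspace (prod_topology \<sigma> \<sigma>). \<forall>U. openin (prod_topology \<sigma> \<sigma>) U \<and> q \<in> U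
                    \<longrightarrow> (\<exists>m k. m \<noteq> k \<and> p m \<in> U \<and> p k \<in> U)"
    by (intro compact_t1_injective_sequence_clusters)
  then obtain q where q: "q \<in> topspace (prod_topology \<sigma> \<sigma>)"
    and cluster: "\<And>U. openin (prod_topology \<sigma> \<sigma>) U \<Longrightarrow> q \<in> U \<Longrightarrow>
                    \<exists>m k. m \<noteq> k \<and> p m \<in> U \<and> p k \<in> U"
    by blast
  obtain qa qb where qab: "q = (qa, qb)" "qa \<in> topspace \<sigma>" "qb \<in> topspace \<sigma>"
    using q by (cases q) auto
  have "e \<in> topspace \<sigma>" "z \<in> topspace \<sigma>" "mul qa qb \<in> topspace \<sigma>"
    using closed ab qab diag[of 0] off[of 0 1] by auto
  then obtain W where W: "openin \<sigma> W" "mul qa qb \<in> W" "e \<notin> W \<or> z \<notin> W"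
    using t1_space_neighbourhood_avoiding_one Haus Hausdorff_imp_t1_space \<open>e \<noteq> z\<close> by metis
  then obtain G H where GH: "openin \<sigma> G" "openin \<sigma> H" "qa \<in> G" "qb \<in> H"
    and sub: "\<And>u v. u \<in> G \<Longrightarrow> v \<in> H \<Longrightarrow> mul u v \<in> W"
    using continuous_map_prod_neighbourhoods[OF cont] qab by metis
  have "openin (prod_topology \<sigma> \<sigma>) (G \<times> H)" "q \<in> G \<times> H"
    using GH qab by (simp_all add: openin_prod_Times_iff)
  from cluster[OF this] obtain m k where "m \<noteq> k" "p m \<in> G \<times> H" "p k \<in> G \<times> H"
    by metis
  then have "(a m, b m) \<in> G \<times> H" "(a m, b k) \<in> G \<times> H"
    by (auto simp: p_def)
  then have "e \<in> W" "z \<in> W"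
    using sub diag[of m] off[OF \<open>m \<noteq> k\<close>] by auto
  then show False
    using W(3) by blast
qed

text \<open>If the Bohr map is constant on a nonempty topological semigroup, the Bohr
  compactification is a single point: the identity and the constant map both factor the
  Bohr map through itself, so by uniqueness they coincide.\<close>
lemma bohr_compactification_singleton_if_constant:
  assumes bohr: "bohr_compactification \<tau> m \<beta> \<sigma> mB"
    and "topological_semigroup \<tau> m" and s0: "s0 \<in> topspace \<tau>"
    and const: "\<And>s. s \<in> topspace \<tau> \<Longrightarrow> \<beta> s = e"
  shows "topspace \<sigma> = {e}"
proof -
  have ts: "topological_semigroup \<sigma> mB" and cs: "compact_space \<sigma>"
    and cb: "continuous_map \<tau> \<sigma> \<beta>" and hb: "semigroup_hom (topspace \<tau>) m mB \<beta>"
    using bohr by (simp_all add: bohr_compactification_def)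
  have e: "e \<in> topspace \<sigma>"
    using cb s0 const continuous_map_image_subset_topspace by fastforce
  have "m s0 s0 \<in> topspace \<tau>"
    using \<open>topological_semigroup \<tau> m\<close> s0 by (simp add: topological_semigroup_def)
  then have idem: "mB e e = e"
    using hb s0 const by (metis semigroup_hom_def)
  have "\<exists>f. \<forall>f'. continuous_map \<sigma> \<sigma> f' \<and> semigroup_hom (topspace \<sigma>) mB mB f' \<and>
      (\<forall>s\<in>topspace \<tau>. \<beta> s = f' (\<beta> s)) \<longrightarrow> (\<forall>x\<in>topspace \<sigma>. f' x = f x)"
    using bohr[unfolded bohr_compactification_def, THEN conjunct2, THEN conjunct2,
        THEN conjunct2, THEN conjunct2, rule_format, of \<sigma> mB \<beta>] ts cs cb hb by blast
  then obtain f where uniq: "\<And>f'. continuous_map \<sigma> \<sigma> f' \<Longrightarrow> semigroup_hom (topspace \<sigma>) mB mB f' \<Longrightarrow>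
      \<forall>s\<in>topspace \<tau>. \<beta> s = f' (\<beta> s) \<Longrightarrow> \<forall>x\<in>topspace \<sigma>. f' x = f x"
    by blast
  have "\<forall>x\<in>topspace \<sigma>. id x = f x"
    by (rule uniq) (simp_all add: semigroup_hom_def)
  moreover have "\<forall>x\<in>topspace \<sigma>. (\<lambda>_. e) x = f x"
  proof (rule uniq)
    show "continuous_map \<sigma> \<sigma> (\<lambda>_. e)"
      using e by (simp add: continuous_map_const)
    show "semigroup_hom (topspace \<sigma>) mB mB (\<lambda>_. e)"
      using idem by (simp add: semigroup_hom_def)
    show "\<forall>s\<in>topspace \<tau>. \<beta> s = e"
      using const by blast
  qed
  ultimately have "x = e" if "x \<in> topspace \<sigma>" for x
    using that by simp
  then show ?thesis
    using e by blast
qed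

section \<open>Orthogonal factorisations in I_lambda^n\<close>

lemma finite_dom_card_eq_rank:
  assumes "inj_on \<alpha> (dom \<alpha>)" and "finite (ran \<alpha>)"
  shows "finite (dom \<alpha>)" and "card (dom \<alpha>) = rank \<alpha>"
proof -
  have ran: "ran \<alpha> = (the \<circ> \<alpha>) ` dom \<alpha>"
    by (force simp: ran_def dom_def)
  have "inj_on (the \<circ> \<alpha>) (dom \<alpha>)"
    using assms(1) unfolding inj_on_def by (auto simp: dom_def)
  then show "finite (dom \<alpha>)" and "card (dom \<alpha>) = rank \<alpha>"
    using ran assms(2) by (metis card_image finite_image_iff rank_def)+
qed

lemma disjoint_copies:
  fixes D X :: "'a set"
  assumes "infinite X" and "finite D"
  obtains c :: "nat \<Rightarrow> 'a \<Rightarrow> 'a"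
  where "\<And>m. inj_on (c m) D" "\<And>m. c m ` D \<subseteq> X"
    and "\<And>m k. m \<noteq> k \<Longrightarrow> c m ` D \<inter> c k ` D = {}"
proof -
  obtain e :: "nat \<Rightarrow> 'a" where e: "inj e" "range e \<subseteq> X"
    using infinite_countable_subset[OF \<open>infinite X\<close>] by blast
  have d: "inj_on (to_nat_on D) D"
    using \<open>finite D\<close> by (simp add: countable_finite inj_on_to_nat_on)
  define c where "c m x = e (prod_encode (m, to_nat_on D x))" for m x
  have c_eq: "c m x = c k y \<longleftrightarrow> m = k \<and> to_nat_on D x = to_nat_on D y" for m k x y
    using e(1) by (auto simp: c_def inj_eq prod_encode_eq)
  show ?thesis
  proof
    show "inj_on (c m) D" for m
      using d c_eq by (auto simp: inj_on_def)
    show "c m ` D \<subseteq> X" for m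
      using e(2) by (auto simp: c_def)
    show "c m ` D \<inter> c k ` D = {}" if "m \<noteq> k" for m k
      using that c_eq by auto
  qed
qed

definition copy_in :: "('a \<rightharpoonup> 'a) \<Rightarrow> ('a \<Rightarrow> 'a) \<Rightarrow> ('a \<rightharpoonup> 'a)" where
  "copy_in \<alpha> c = (Some \<circ> c) |` dom \<alpha>"

definition copy_out :: "('a \<rightharpoonup> 'a) \<Rightarrow> ('a \<Rightarrow> 'a) \<Rightarrow> ('a \<rightharpoonup> 'a)" where
  "copy_out \<alpha> c = (\<lambda>y. if y \<in> c ` dom \<alpha> then \<alpha> (inv_into (dom \<alpha>) c y) else None)"

lemma I_mult_copy_in_copy_out:
  assumes "inj_on c (dom \<alpha>)"
  shows "I_mult (copy_in \<alpha> c) (copy_out \<alpha> c) = \<alpha>"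
proof
  fix x
  show "I_mult (copy_in \<alpha> c) (copy_out \<alpha> c) x = \<alpha> x"
  proof (cases "x \<in> dom \<alpha>")
    case True
    then show ?thesis
      using assms by (simp add: I_mult_def copy_in_def copy_out_def inv_into_f_f)
  next
    case False
    then show ?thesis
      by (simp add: I_mult_def copy_in_def map_comp_def domIff)
  qed
qed

lemma I_mult_copy_in_copy_out_disjoint:
  assumes "c' ` dom \<alpha> \<inter> c ` dom \<alpha> = {}"
  shows "I_mult (copy_in \<alpha> c') (copy_out \<alpha> c) = Map.empty"
proof
  fix x
  have "c' x \<notin> c ` dom \<alpha>" if "x \<in> dom \<alpha>"
    using assms that by blast
  then show "I_mult (copy_in \<alpha> c') (copy_out \<alpha> c) x = None"
    by (cases "x \<in> dom \<alpha>") (simp_all add: I_mult_def copy_in_def copy_out_def)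
qed

text \<open>Both halves of the factorisation stay in I_lambda^n: copy_in has rank |dom alpha| =
  rank alpha, and copy_out has the same range as alpha.\<close>
lemma copy_in_I_rank:
  assumes "\<alpha> \<in> I_rank X n" and c: "inj_on c (dom \<alpha>)" "c ` dom \<alpha> \<subseteq> X"
  shows "copy_in \<alpha> c \<in> I_rank X n"
proof -
  have \<alpha>: "dom \<alpha> \<subseteq> X" "inj_on \<alpha> (dom \<alpha>)" "finite (ran \<alpha>)" "rank \<alpha> \<le> n"
    using assms(1) by (auto simp: I_rank_def partial_bijections_def)
  have dom: "dom (copy_in \<alpha> c) = dom \<alpha>" and ran: "ran (copy_in \<alpha> c) = c ` dom \<alpha>"
    by (auto simp: copy_in_def ran_def restrict_map_def split: if_splits)
  have "inj_on (copy_in \<alpha> c) (dom \<alpha>)"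
    using c(1) by (auto simp: inj_on_def copy_in_def)
  moreover have "card (c ` dom \<alpha>) = rank \<alpha>"
    using c(1) finite_dom_card_eq_rank[OF \<alpha>(2,3)] by (simp add: card_image)
  ultimately show ?thesis
    using \<alpha> c(2) finite_dom_card_eq_rank[OF \<alpha>(2,3)]
    by (simp add: I_rank_def partial_bijections_def rank_def dom ran)
qed

lemma copy_out_I_rank:
  assumes "\<alpha> \<in> I_rank X n" and c: "inj_on c (dom \<alpha>)" "c ` dom \<alpha> \<subseteq> X"
  shows "copy_out \<alpha> c \<in> I_rank X n"
proof -
  have \<alpha>: "ran \<alpha> \<subseteq> X" "inj_on \<alpha> (dom \<alpha>)" "finite (ran \<alpha>)" "rank \<alpha> \<le> n"
    using assms(1) by (auto simp: I_rank_def partial_bijections_def)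
  have inv: "inv_into (dom \<alpha>) c (c x) = x" if "x \<in> dom \<alpha>" for x
    using c(1) that by (simp add: inv_into_f_f)
  have dom: "dom (copy_out \<alpha> c) = c ` dom \<alpha>"
    using inv by (force simp: copy_out_def dom_def split: if_splits)
  have ran: "ran (copy_out \<alpha> c) = ran \<alpha>"
    using inv by (force simp: copy_out_def ran_def dom_def split: if_splits)
  have "inj_on (copy_out \<alpha> c) (c ` dom \<alpha>)"
    using \<alpha>(2) inv by (auto simp: inj_on_def copy_out_def)
  then show ?thesis
    using \<alpha> c(2) by (simp add: I_rank_def partial_bijections_def rank_def dom ran)
qed

lemma I_rank_orthogonal_factorisations:
  fixes X :: "'a set" and \<alpha> :: "'a \<rightharpoonup> 'a"
  assumes "infinite X" and "\<alpha> \<in> I_rank X n"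
  obtains a b :: "nat \<Rightarrow> ('a \<rightharpoonup> 'a)"
  where "\<And>m. a m \<in> I_rank X n" "\<And>m. b m \<in> I_rank X n"
    and "\<And>m. I_mult (a m) (b m) = \<alpha>"
    and "\<And>m k. m \<noteq> k \<Longrightarrow> I_mult (a m) (b k) = Map.empty"
proof -
  have fin: "finite (dom \<alpha>)"
    using assms(2) finite_dom_card_eq_rank(1)
    by (auto simp: I_rank_def partial_bijections_def)
  obtain c :: "nat \<Rightarrow> 'a \<Rightarrow> 'a" where "\<And>m. inj_on (c m) (dom \<alpha>)" "\<And>m. c m ` dom \<alpha> \<subseteq> X"
    and "\<And>m k. m \<noteq> k \<Longrightarrow> c m ` dom \<alpha> \<inter> c k ` dom \<alpha> = {}"
    using disjoint_copies[OF assms(1) fin] by metis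
  then show ?thesis
    using that[of "\<lambda>m. copy_in \<alpha> (c m)" "\<lambda>m. copy_out \<alpha> (c m)"] assms(2)
    by (simp add: copy_in_I_rank copy_out_I_rank I_mult_copy_in_copy_out
        I_mult_copy_in_copy_out_disjoint)
qed

lemma continuous_hom_I_rank_constant:
  fixes X :: "'a set" and g :: "('a \<rightharpoonup> 'a) \<Rightarrow> 'b"
  assumes "infinite X" and top: "topspace \<tau> = I_rank X n"
    and "topological_semigroup \<sigma> mul" and "compact_space \<sigma>"
    and g: "continuous_map \<tau> \<sigma> g" "semigroup_hom (topspace \<tau>) I_mult mul g"
    and \<alpha>: "\<alpha> \<in> topspace \<tau>"
  shows "g \<alpha> = g Map.empty"
proof -
  obtain a b :: "nat \<Rightarrow> ('a \<rightharpoonup> 'a)" where ab: "\<And>m. a m \<in> I_rank X n" "\<And>m. b m \<in> I_rank X n"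
    and diag: "\<And>m. I_mult (a m) (b m) = \<alpha>"
    and off: "\<And>m k. m \<noteq> k \<Longrightarrow> I_mult (a m) (b k) = Map.empty"
    using I_rank_orthogonal_factorisations[OF \<open>infinite X\<close> \<alpha>[unfolded top]] by metis
  have hom: "g (I_mult x y) = mul (g x) (g y)" if "x \<in> I_rank X n" "y \<in> I_rank X n" for x y
    using g(2) that by (simp add: semigroup_hom_def top)
  show ?thesis
  proof (rule compact_semigroup_diagonal_collapse
      [OF \<open>topological_semigroup \<sigma> mul\<close> \<open>compact_space \<sigma>\<close>, of "g \<circ> a" "g \<circ> b"])
    show "(g \<circ> a) m \<in> topspace \<sigma>" "(g \<circ> b) m \<in> topspace \<sigma>" for m
      using ab g(1) top by (auto intro: continuous_map_image_subset_topspace[THEN subsetD])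
    show "mul ((g \<circ> a) m) ((g \<circ> b) m) = g \<alpha>" for m
      using hom[OF ab(1,2), of m m] diag[of m] by simp
    show "mul ((g \<circ> a) m) ((g \<circ> b) k) = g Map.empty" if "m \<noteq> k" for m k
      using hom[OF ab(1,2), of m k] off[OF that] by simp
  qed
qed

theorem theorem10:
  fixes X :: "'a set" and n :: nat
    and \<tau> :: "('a \<rightharpoonup> 'a) topology"
    and \<beta> :: "('a \<rightharpoonup> 'a) \<Rightarrow> 'b" and \<sigma> :: "'b topology" and mB :: "'b \<Rightarrow> 'b \<Rightarrow> 'b"
  assumes "infinite X" and "n \<ge> 1"
    and "topspace \<tau> = I_rank X n"
    and "topological_semigroup \<tau> I_mult"
    and "bohr_compactification \<tau> I_mult \<beta> \<sigma> mB"
  shows "\<exists>b. topspace \<sigma> = {b}"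
proof -
  have empty: "Map.empty \<in> topspace \<tau>"
    using assms(3) by (simp add: I_rank_def partial_bijections_def rank_def)
  have "topological_semigroup \<sigma> mB" "compact_space \<sigma>"
    "continuous_map \<tau> \<sigma> \<beta>" "semigroup_hom (topspace \<tau>) I_mult mB \<beta>"
    using assms(5) by (simp_all add: bohr_compactification_def)
  then have "\<beta> s = \<beta> Map.empty" if "s \<in> topspace \<tau>" for s
    using continuous_hom_I_rank_constant[OF assms(1,3)] that by blast
  then have "topspace \<sigma> = {\<beta> Map.empty}"
    using bohr_compactification_singleton_if_constant[OF assms(5,4) empty] by blast
  then show ?thesis by blast
qed

end
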